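(* Let $p$ be an odd prime and let $F_{g\,\mathsf{PR},\,h\,\mathsf{ANY}}(p)$ denote the number of pairs $(g,h)$ of integers with $1\le g\le p-1$, $1\le h\le p-1$, $g$ a primitive root modulo $p$, and $g^{h}\equiv h \pmod p$. Then \[ \left|F_{g\,\mathsf{PR},\,h\,\mathsf{ANY}}(p)-\phi(p-1)\right|\le d(p-1)^{2}\,\sigma(p-1)\,\sqrt{p}\,(1+\ln p). \]
   Context: $\phi$ is Euler's totient function, $d(n)$ denotes the number of positive divisors of $n$, $\sigma(n)$ the sum of the positive divisors of $n$, and $\ln$ the natural logarithm. *)

theory Defs
  imports "HOL-Analysis.Analysis" "HOL-Number_Theory.Number_Theory"
begin

definition num_divisors :: "nat \<Rightarrow> nat" where
  "num_divisors n = card {d. d dvd n \<and> d > 0}"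

definition sum_divisors :: "nat \<Rightarrow> nat" where
  "sum_divisors n = (\<Sum>d\<in>{d. d dvd n \<and> d > 0}. d)"

definition F_PR_ANY :: "nat \<Rightarrow> nat" where
  "F_PR_ANY p = card {(g, h). g \<in> {1..p-1} \<and> h \<in> {1..p-1} \<and>
      residue_primroot p g \<and> [g ^ h = h] (mod p)}"

end

theory Submission imports Defs begin

text \<open>Fix the exponent h. Every g in {1..p-1} with g^h \<equiv> h also satisfies g^(p-1) \<equiv> 1,
so by Bezout g^gcd(h,p-1) is a fixed residue, and a polynomial congruence of degree
gcd(h,p-1) modulo p has at most that many roots. Even ignoring that g must be a primitive
root, F(p) is therefore at most the sum of gcd(h,p-1) over h, which Pillai's identity
bounds by (p-1) d(p-1). As \<phi>(p-1) \<le> p-1 \<le> \<sigma>(p-1), the difference is at most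
d(p-1) \<sigma>(p-1).\<close>

lemma card_pow_cong_le_gcd:
  fixes p h a :: nat
  assumes p: "prime p" and h: "h > 0"
  shows "card {g\<in>{1..p-1}. [g ^ h = a] (mod p)} \<le> gcd h (p - 1)"
proof -
  define d where "d = gcd h (p - 1)"
  obtain s t where bezout: "h * s = (p - 1) * t + d"
    using bezout_nat[of h "p - 1"] h unfolding d_def by auto
  have "[g ^ d = a ^ s] (mod p)" if g: "g \<in> {1..p-1}" "[g ^ h = a] (mod p)" for g
  proof -
    have "\<not> p dvd g" using g(1) by (auto dest: dvd_imp_le)
    then have "[g ^ ((p - 1) * t) = 1] (mod p)"
      using fermat_theorem[OF p] cong_pow[of _ 1 p t] by (simp add: power_mult)
    then have "[g ^ ((p - 1) * t) * g ^ d = g ^ d] (mod p)"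
      using cong_mult[OF _ cong_refl] by fastforce
    moreover have "g ^ ((p - 1) * t) * g ^ d = (g ^ h) ^ s"
      by (simp add: bezout power_add flip: power_mult)
    moreover have "[(g ^ h) ^ s = a ^ s] (mod p)" using g(2) by (rule cong_pow)
    ultimately show ?thesis by (metis cong_sym cong_trans)
  qed
  then have "{g\<in>{1..p-1}. [g ^ h = a] (mod p)} \<subseteq> {x\<in>{..<p}. [x ^ d = a ^ s] (mod p)}"
    using prime_gt_1_nat[OF p] by auto
  then have "card {g\<in>{1..p-1}. [g ^ h = a] (mod p)} \<le> card {x\<in>{..<p}. [x ^ d = a ^ s] (mod p)}"
    by (rule card_mono[rotated]) simp
  also have "\<dots> \<le> d"
    using h unfolding d_def by (intro roots_mod_prime_bound[OF p]) simp
  finally show ?thesis unfolding d_def .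
qed

lemma sum_gcd_eq_sum_divisors_totient:
  fixes n :: nat
  assumes n: "n > 0"
  shows "(\<Sum>k\<in>{1..n}. gcd k n) = (\<Sum>d | d dvd n. d * totient (n div d))"
proof -
  define A where "A d = {k\<in>{0<..n}. gcd k n = d}" for d
  have "{1..n} = (\<Union>d\<in>{d. d dvd n}. A d)" by (auto simp: A_def)
  then have "(\<Sum>k\<in>{1..n}. gcd k n) = (\<Sum>d | d dvd n. \<Sum>k\<in>A d. gcd k n)"
    using n by (simp only:) (rule sum.UNION_disjoint, auto simp: A_def)
  also have "\<dots> = (\<Sum>d | d dvd n. d * card (A d))"
    by (rule sum.cong) (auto simp: A_def)
  also have "\<dots> = (\<Sum>d | d dvd n. d * totient (n div d))"
    using card_gcd_eq_totient[OF n] by (intro sum.cong) (simp_all add: A_def)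
  finally show ?thesis .
qed

lemma num_divisors_eq_card_dvd:
  fixes n :: nat
  assumes "n > 0"
  shows "num_divisors n = card {d. d dvd n}"
  using assms unfolding num_divisors_def by (metis dvd_pos_nat)

lemma num_divisors_pos:
  fixes n :: nat
  assumes "n > 0"
  shows "num_divisors n > 0"
  using assms by (auto simp: num_divisors_eq_card_dvd card_gt_0_iff)

lemma le_sum_divisors: "n \<le> sum_divisors n"
proof (cases "n = 0")
  case False
  then have "finite {d. d dvd n \<and> d > 0}" by (auto intro: finite_subset[of _ "{..n}"])
  with False show ?thesis unfolding sum_divisors_def by (intro member_le_sum) auto
qed simp

lemma sum_gcd_le_mult_num_divisors:
  fixes n :: nat
  assumes n: "n > 0"
  shows "(\<Sum>k\<in>{1..n}. gcd k n) \<le> n * num_divisors n"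
proof -
  have "(\<Sum>k\<in>{1..n}. gcd k n) = (\<Sum>d | d dvd n. d * totient (n div d))"
    using n by (rule sum_gcd_eq_sum_divisors_totient)
  also have "\<dots> \<le> (\<Sum>d | d dvd n. d * (n div d))"
    by (intro sum_mono mult_le_mono2 totient_le)
  also have "\<dots> = (\<Sum>d | d dvd n. n)" by (intro sum.cong) auto
  also have "\<dots> = n * num_divisors n" using n by (simp add: num_divisors_eq_card_dvd)
  finally show ?thesis .
qed

lemma F_PR_ANY_le_sum_gcd:
  fixes p :: nat
  assumes p: "prime p"
  shows "F_PR_ANY p \<le> (\<Sum>h\<in>{1..p-1}. gcd h (p - 1))"
proof -
  define S where "S h = {g\<in>{1..p-1}. [g ^ h = h] (mod p)}" for h
  have "F_PR_ANY p \<le> card (prod.swap ` (SIGMA h:{1..p-1}. S h))"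
    unfolding F_PR_ANY_def by (rule card_mono) (auto simp: S_def)
  also have "\<dots> \<le> card (SIGMA h:{1..p-1}. S h)" by (rule card_image_le) (simp add: S_def)
  also have "\<dots> = (\<Sum>h\<in>{1..p-1}. card (S h))" by (rule card_SigmaI) (auto simp: S_def)
  also have "\<dots> \<le> (\<Sum>h\<in>{1..p-1}. gcd h (p - 1))"
    unfolding S_def by (intro sum_mono card_pow_cong_le_gcd[OF p]) auto
  finally show ?thesis .
qed

lemma one_le_sqrt_mult_one_plus_ln:
  fixes x :: real
  assumes "1 \<le> x"
  shows "1 \<le> sqrt x * (1 + ln x)"
proof -
  have "1 \<le> sqrt x" "1 \<le> 1 + ln x" using assms by simp_all
  then show ?thesis using mult_mono[of 1 "sqrt x" 1 "1 + ln x"] by simp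
qed

theorem mainTheorem2:
  fixes p :: nat
  assumes "prime p" and "odd p"
  shows "\<bar>real (F_PR_ANY p) - real (totient (p - 1))\<bar>
    \<le> real (num_divisors (p - 1)) ^ 2 * real (sum_divisors (p - 1)) * sqrt (real p) * (1 + ln (real p))"
proof -
  define n where "n = p - 1"
  have p: "p > 1" using assms(1) prime_gt_1_nat by blast
  then have n: "n > 0" unfolding n_def by simp
  let ?D = "real (num_divisors n)" and ?\<sigma> = "real (sum_divisors n)"
  have "F_PR_ANY p \<le> n * num_divisors n"
    using F_PR_ANY_le_sum_gcd[OF assms(1)] sum_gcd_le_mult_num_divisors[OF n]
    unfolding n_def by linarith
  moreover have "totient n \<le> n * num_divisors n"
    using totient_le[of n] num_divisors_pos[OF n]
    by (metis One_nat_def Suc_leI le_trans mult_le_mono2 mult.right_neutral)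
  ultimately have "\<bar>real (F_PR_ANY p) - real (totient n)\<bar> \<le> real n * ?D"
    by (simp add: abs_le_iff flip: of_nat_mult)
  also have "\<dots> \<le> ?\<sigma> * (?D * ?D)"
    using le_sum_divisors[of n] num_divisors_pos[OF n]
    by (intro mult_mono) (auto simp: mult_le_cancel_left1)
  also have "\<dots> \<le> ?\<sigma> * (?D * ?D) * (sqrt (real p) * (1 + ln (real p)))"
    using one_le_sqrt_mult_one_plus_ln[of "real p"] p mult_left_mono[of 1 _ "?\<sigma> * (?D * ?D)"]
    by simp
  finally show ?thesis unfolding n_def by (simp add: power2_eq_square mult_ac)
qed

end
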